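(* Let $\psi,h\in C^\infty(B_2)$ with $0<\psi<\frac12$ and $h\ge0$, and define $f(x):=\inf_{y\in B(x,\psi(x))}h(y)$. Then for a.e. $x\in B_1$, $$|\nabla f(x)-\nabla h(y)|=|\nabla h(y)|\,|\nabla\psi(x)|\quad\text{whenever } y\in B(x,\psi(x))\text{ and } f(x)=h(y).$$
   Context: $B(x,r)$ is the closed ball of radius $r$ centered at $x$; $f$ is Lipschitz continuous, so $\nabla f$ exists a.e. *)

theory Defs
  imports "HOL-Analysis.Analysis"
begin

inductive iter_deriv :: "'a set \<Rightarrow> ('a::real_normed_vector \<Rightarrow> real) \<Rightarrow> ('a \<Rightarrow> real) \<Rightarrow> bool"
  for S f where
  base: "iter_deriv S f f"
| step: "iter_deriv S f g \<Longrightarrow> g differentiable_on S \<Longrightarrow>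
           iter_deriv S f (\<lambda>x. frechet_derivative g (at x) v)"

definition smooth_on :: "'a set \<Rightarrow> ('a::real_normed_vector \<Rightarrow> real) \<Rightarrow> bool" where
  "smooth_on S f \<longleftrightarrow> (\<forall>g. iter_deriv S f g \<longrightarrow> g differentiable_on S)"

end

theory Submission
  imports Defs
begin

(* Write f x = min { h (x + psi x * e) : |e| <= 1 } for x in B_1, a minimum of a family G(., e) of
   C^1 functions that is uniformly C^1 in e.  The gradients D_x G(x, e) at the minimising
   parameters e ("active gradients") form an almost antimonotone multivalued map:
   (x - z) . (a - b) <= o(|x - z|).  Such a map is single-valued outside a countable union of
   Lipschitz graphs over hyperplanes, i.e. almost everywhere, and wherever the active gradient is a
   single vector p it is the gradient of f (Danskin).  For a minimiser y = x + psi x * e the chain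
   rule gives p = grad h y + (grad h y . e) grad psi x, and the first-order condition for
   minimising h over the ball cball x (psi x) gives grad h y . e = -|grad h y|. *)

lemma GDERIV_unique:
  assumes "GDERIV f x :> a" and "GDERIV f x :> b"
  shows "a = b"
proof -
  have "(\<lambda>v. v \<bullet> a) = (\<lambda>v. v \<bullet> b)"
    using has_derivative_unique assms unfolding gderiv_def by blast
  then have "(a - b) \<bullet> (a - b) = 0"
    by (metis inner_diff_right right_minus_eq)
  then show ?thesis by simp
qed

lemma linear_eq_inner_sum_Basis:
  fixes L :: "'a::euclidean_space \<Rightarrow> real"
  assumes "linear L"
  shows "L v = v \<bullet> (\<Sum>b\<in>Basis. L b *\<^sub>R b)"
proof -
  have "L v = L (\<Sum>b\<in>Basis. (v \<bullet> b) *\<^sub>R b)" by (simp add: euclidean_representation)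
  also have "\<dots> = (\<Sum>b\<in>Basis. (v \<bullet> b) * L b)"
    using assms by (simp add: linear_sum linear_scale)
  also have "\<dots> = v \<bullet> (\<Sum>b\<in>Basis. L b *\<^sub>R b)"
    by (simp add: inner_sum_right mult.commute)
  finally show ?thesis .
qed

lemma smooth_on_imp_continuous_gradient:
  fixes h :: "'a::euclidean_space \<Rightarrow> real"
  assumes "smooth_on S h" and "open S"
  obtains g where "\<And>x. x \<in> S \<Longrightarrow> GDERIV h x :> g x" and "continuous_on S g"
proof
  define g where "g x = (\<Sum>b\<in>Basis. frechet_derivative h (at x) b *\<^sub>R b)" for x
  show "GDERIV h x :> g x" if "x \<in> S" for x
  proof -
    have "h differentiable_on S"
      using assms(1) iter_deriv.base unfolding smooth_on_def by blast
    then have "(h has_derivative frechet_derivative h (at x)) (at x)"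
      using that assms(2) differentiable_on_eq_differentiable_at frechet_derivative_works by blast
    moreover have "frechet_derivative h (at x) = (\<lambda>v. v \<bullet> g x)"
      using calculation has_derivative_linear linear_eq_inner_sum_Basis unfolding g_def by blast
    ultimately show ?thesis unfolding gderiv_def by simp
  qed
  have "continuous_on S (\<lambda>x. frechet_derivative h (at x) b)" for b
  proof -
    have "iter_deriv S h (\<lambda>x. frechet_derivative h (at x) b)"
      using assms(1) iter_deriv.base iter_deriv.step unfolding smooth_on_def by blast
    then show ?thesis
      using assms(1) differentiable_imp_continuous_on unfolding smooth_on_def by blast
  qed
  then show "continuous_on S g"
    unfolding g_def by (intro continuous_intros)
qed

lemma inner_gradient_nonneg_at_min_on_convex:
  assumes "GDERIV h y :> g" and "convex S" and "y \<in> S" and "z \<in> S"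
    and min: "\<And>w. w \<in> S \<Longrightarrow> h y \<le> h w"
  shows "(z - y) \<bullet> g \<ge> 0"
proof (rule ccontr)
  assume "\<not> (z - y) \<bullet> g \<ge> 0"
  have "((\<lambda>t. y + t *\<^sub>R (z - y)) has_derivative (\<lambda>t. t *\<^sub>R (z - y))) (at 0)"
    by (auto intro!: derivative_eq_intros)
  moreover have "(h has_derivative (\<lambda>v. v \<bullet> g)) (at (y + 0 *\<^sub>R (z - y)))"
    using assms(1) unfolding gderiv_def by simp
  ultimately have "((\<lambda>t. h (y + t *\<^sub>R (z - y))) has_derivative (\<lambda>t. (t *\<^sub>R (z - y)) \<bullet> g)) (at 0)"
    by (rule has_derivative_compose)
  then have "DERIV (\<lambda>t. h (y + t *\<^sub>R (z - y))) 0 :> (z - y) \<bullet> g"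
    by (simp add: has_field_derivative_def mult.commute[of _ "(z - y) \<bullet> g"])
  from DERIV_neg_dec_right[OF this] \<open>\<not> (z - y) \<bullet> g \<ge> 0\<close>
  obtain d where "d > 0" and dec: "\<And>t. 0 < t \<Longrightarrow> t < d \<Longrightarrow> h (y + t *\<^sub>R (z - y)) < h y"
    by force
  define t where "t = min d 1 / 2"
  have t: "0 < t" "t < d" "t \<le> 1" using \<open>d > 0\<close> by (auto simp: t_def)
  have "y + t *\<^sub>R (z - y) = (1 - t) *\<^sub>R y + t *\<^sub>R z" by (simp add: algebra_simps)
  then have "y + t *\<^sub>R (z - y) \<in> S"
    using convexD_alt[OF assms(2-4)] t by simp
  then show False using dec[OF t(1,2)] min by fastforce
qed

text \<open>Equality in Cauchy-Schwarz: a nonzero gradient at a minimiser on a ball points from the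
  minimiser to the centre, and the minimiser lies on the boundary sphere.\<close>
lemma gradient_at_min_on_cball:
  assumes "GDERIV h y :> g" and "y \<in> cball c r"
    and min: "\<And>z. z \<in> cball c r \<Longrightarrow> h y \<le> h z"
  shows "(y - c) \<bullet> g = - r * norm g"
proof (cases "g = 0")
  case False
  define z where "z = c - (r / norm g) *\<^sub>R g"
  have "r \<ge> 0" using assms(2) zero_le_dist[of c y] unfolding mem_cball by linarith
  then have "z \<in> cball c r" using False by (simp add: z_def dist_norm)
  then have "(z - y) \<bullet> g \<ge> 0"
    using inner_gradient_nonneg_at_min_on_convex[OF assms(1) convex_cball assms(2)] min by blast
  then have lower: "(c - y) \<bullet> g \<ge> r * norm g"
    using False by (simp add: z_def inner_diff_left power2_norm_eq_inner[symmetric] power2_eq_square)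
  have "(c - y) \<bullet> g \<le> norm (c - y) * norm g" by (rule norm_cauchy_schwarz)
  also have "\<dots> \<le> r * norm g"
    using assms(2) by (intro mult_right_mono) (auto simp: dist_norm)
  finally show ?thesis using lower by (simp add: inner_diff_left)
qed simp

lemma norm_le_twice_orthogonal_component:
  fixes u w :: "'a::real_inner"
  assumes "w \<noteq> 0" and "\<bar>u \<bullet> w\<bar> \<le> 1/2 * norm w * norm u"
  shows "norm u \<le> 2 * norm (u - ((u \<bullet> w) / (w \<bullet> w)) *\<^sub>R w)"
proof -
  define c where "c = (u \<bullet> w) / (w \<bullet> w)"
  have "w \<bullet> w > 0" using assms(1) by simp
  have "(norm (u - c *\<^sub>R w))\<^sup>2 = u \<bullet> u - 2 * c * (u \<bullet> w) + c * c * (w \<bullet> w)"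
    by (simp add: power2_norm_eq_inner inner_diff_left inner_diff_right inner_commute algebra_simps)
  also have "\<dots> = u \<bullet> u - (u \<bullet> w)\<^sup>2 / (w \<bullet> w)"
    using \<open>w \<bullet> w > 0\<close> by (simp add: c_def field_simps power2_eq_square)
  finally have "(norm (u - c *\<^sub>R w))\<^sup>2 = (norm u)\<^sup>2 - (u \<bullet> w)\<^sup>2 / (norm w)\<^sup>2"
    by (simp add: power2_norm_eq_inner)
  moreover have "(u \<bullet> w)\<^sup>2 \<le> (1/2 * norm w * norm u)\<^sup>2"
    using assms(2) by (metis abs_ge_zero abs_le_square_iff abs_of_nonneg order_trans power2_abs)
  then have "(u \<bullet> w)\<^sup>2 / (norm w)\<^sup>2 \<le> 1/4 * (norm u)\<^sup>2"
    using assms(1) by (simp add: divide_simps power_mult_distrib mult.commute)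
  ultimately have "(norm u)\<^sup>2 \<le> 4 * (norm (u - c *\<^sub>R w))\<^sup>2"
    using zero_le_power2[of "norm u"] by linarith
  then have "(norm u)\<^sup>2 \<le> (2 * norm (u - c *\<^sub>R w))\<^sup>2"
    by (simp add: power_mult_distrib)
  then show ?thesis unfolding c_def by (rule power2_le_imp_le) simp
qed

text \<open>Projection onto the hyperplane orthogonal to \<open>w\<close> is injective on such a set with a
  2-Lipschitz inverse, so the set is a Lipschitz image of a subset of that hyperplane.\<close>
lemma negligible_secants_off_cone:
  fixes A :: "'a::euclidean_space set"
  assumes "w \<noteq> 0"
    and cone: "\<And>x z. x \<in> A \<Longrightarrow> z \<in> A \<Longrightarrow> \<bar>(x - z) \<bullet> w\<bar> \<le> 1/2 * norm w * norm (x - z)"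
  shows "negligible A"
proof -
  define P where "P v = v - ((v \<bullet> w) / (w \<bullet> w)) *\<^sub>R w" for v
  have P_diff: "P x - P z = P (x - z)" for x z
    by (simp add: P_def inner_diff_left algebra_simps diff_divide_distrib)
  have P_expands: "norm (x - z) \<le> 2 * norm (P x - P z)" if "x \<in> A" "z \<in> A" for x z
  proof -
    have "norm (x - z) \<le> 2 * norm (P (x - z))"
      unfolding P_def by (rule norm_le_twice_orthogonal_component[OF assms(1) cone[OF that]])
    then show ?thesis by (simp only: P_diff)
  qed
  then have "inj_on P A"
    by (intro inj_onI) fastforce
  have "negligible (P ` A)"
  proof (rule negligible_subset[OF negligible_hyperplane[of w 0]])
    show "P ` A \<subseteq> {v. w \<bullet> v = 0}"
      using assms(1) by (auto simp: P_def inner_diff_right inner_commute)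
  qed (use assms(1) in simp)
  then have "negligible (inv_into A P ` P ` A)"
  proof (rule negligible_locally_Lipschitz_image[OF order_refl])
    fix y assume "y \<in> P ` A"
    then obtain x where x: "x \<in> A" "y = P x" by blast
    show "\<exists>T B. open T \<and> y \<in> T \<and>
            (\<forall>y'\<in>P ` A \<inter> T. norm (inv_into A P y' - inv_into A P y) \<le> B * norm (y' - y))"
      using P_expands \<open>inj_on P A\<close> x by (intro exI[of _ UNIV] exI[of _ 2]) auto
  qed
  then show ?thesis using \<open>inj_on P A\<close> by simp
qed

definition almost_antimonotone_on :: "'a::real_inner set \<Rightarrow> ('a \<Rightarrow> 'a set) \<Rightarrow> bool" where
  "almost_antimonotone_on S D \<longleftrightarrow>
     (\<forall>\<epsilon>>0. \<exists>r>0. \<forall>x\<in>S. \<forall>z\<in>S. norm (x - z) < r \<longrightarrow>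
        (\<forall>a\<in>D x. \<forall>b\<in>D z. (x - z) \<bullet> (a - b) \<le> \<epsilon> * norm (x - z)))"

lemma inner_le_of_norm_less:
  fixes u v :: "'a::real_inner"
  assumes "norm v < \<delta>"
  shows "\<bar>u \<bullet> v\<bar> \<le> \<delta> * norm u"
proof -
  have "\<bar>u \<bullet> v\<bar> \<le> norm u * norm v" by (rule Cauchy_Schwarz_ineq2)
  also have "\<dots> \<le> norm u * \<delta>" using assms by (intro mult_left_mono) auto
  finally show ?thesis by (simp add: mult.commute)
qed

lemma inner_secant_le_near_two_values:
  fixes D :: "'a::real_inner \<Rightarrow> 'a set"
  assumes mono: "\<And>x z a b. x \<in> S \<Longrightarrow> z \<in> S \<Longrightarrow> a \<in> D x \<Longrightarrow> b \<in> D z \<Longrightarrow>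
      (x - z) \<bullet> (a - b) \<le> \<epsilon> * norm (x - z)"
    and near: "\<And>x. x \<in> S \<Longrightarrow> \<exists>a\<in>D x. \<exists>b\<in>D x. norm (a - c) < \<delta> \<and> norm (b - c') < \<delta>"
    and "x \<in> S" and "z \<in> S"
  shows "\<bar>(x - z) \<bullet> (c - c')\<bar> \<le> (\<epsilon> + 2 * \<delta>) * norm (x - z)"
proof -
  obtain a b where ab: "a \<in> D x" "b \<in> D x" "norm (a - c) < \<delta>" "norm (b - c') < \<delta>"
    using near \<open>x \<in> S\<close> by blast
  obtain a' b' where ab': "a' \<in> D z" "b' \<in> D z" "norm (a' - c) < \<delta>" "norm (b' - c') < \<delta>"
    using near \<open>z \<in> S\<close> by blast
  have "(x - z) \<bullet> (c - c') = (x - z) \<bullet> (a - b') - (x - z) \<bullet> (a - c) + (x - z) \<bullet> (b' - c')"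
       "- ((x - z) \<bullet> (c - c')) = (z - x) \<bullet> (a' - b) + (x - z) \<bullet> (a' - c) - (x - z) \<bullet> (b - c')"
    by (simp_all add: inner_diff_right inner_diff_left)
  moreover have "(x - z) \<bullet> (a - b') \<le> \<epsilon> * norm (x - z)" "(z - x) \<bullet> (a' - b) \<le> \<epsilon> * norm (x - z)"
    using mono[of x z] mono[of z x] assms(3,4) ab ab' by (auto simp: norm_minus_commute)
  moreover have "\<bar>(x - z) \<bullet> (a - c)\<bar> \<le> \<delta> * norm (x - z)" "\<bar>(x - z) \<bullet> (b' - c')\<bar> \<le> \<delta> * norm (x - z)"
    "\<bar>(x - z) \<bullet> (a' - c)\<bar> \<le> \<delta> * norm (x - z)" "\<bar>(x - z) \<bullet> (b - c')\<bar> \<le> \<delta> * norm (x - z)"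
    using inner_le_of_norm_less ab(3,4) ab'(3,4) by blast+
  ultimately show ?thesis
    unfolding abs_le_iff by (simp add: algebra_simps)
qed

lemma negligible_if_near_two_separated_values:
  fixes D :: "'a::euclidean_space \<Rightarrow> 'a set"
  assumes mono: "\<And>x z a b. x \<in> S \<Longrightarrow> z \<in> S \<Longrightarrow> a \<in> D x \<Longrightarrow> b \<in> D z \<Longrightarrow>
      (x - z) \<bullet> (a - b) \<le> \<delta> * norm (x - z)"
    and near: "\<And>x. x \<in> S \<Longrightarrow> \<exists>a\<in>D x. \<exists>b\<in>D x. norm (a - c) < \<delta> \<and> norm (b - c') < \<delta>"
    and "\<delta> > 0" and "6 * \<delta> \<le> norm (c - c')"
  shows "negligible S"
proof (rule negligible_secants_off_cone)
  show "c - c' \<noteq> 0" using assms(3,4) by auto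
  fix x z assume "x \<in> S" "z \<in> S"
  have "\<bar>(x - z) \<bullet> (c - c')\<bar> \<le> (\<delta> + 2 * \<delta>) * norm (x - z)"
    using inner_secant_le_near_two_values[OF mono near \<open>x \<in> S\<close> \<open>z \<in> S\<close>] .
  also have "\<dots> \<le> 1/2 * norm (c - c') * norm (x - z)"
    using assms(4) by (intro mult_right_mono) auto
  finally show "\<bar>(x - z) \<bullet> (c - c')\<bar> \<le> 1/2 * norm (c - c') * norm (x - z)" .
qed

text \<open>Points with two values \<open>a \<noteq> b\<close> are covered by countably many pieces on which \<open>D\<close> has
  values near fixed \<open>c \<approx> a\<close> and \<open>c' \<approx> b\<close>; on each piece almost-antimonotonicity keeps all
  secants away from the direction \<open>c - c'\<close>.\<close>
lemma negligible_multivalued_points: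
  fixes D :: "'a::euclidean_space \<Rightarrow> 'a set"
  assumes "almost_antimonotone_on S D"
  shows "negligible {x \<in> S. \<exists>a\<in>D x. \<exists>b\<in>D x. a \<noteq> b}"
proof -
  obtain Q :: "'a set" where "countable Q" and Q_dense: "\<And>U. open U \<Longrightarrow> U \<noteq> {} \<Longrightarrow> \<exists>q\<in>Q. q \<in> U"
    using countable_dense_exists by blast
  define \<epsilon> :: "nat \<Rightarrow> real" where "\<epsilon> m = 1 / Suc m" for m
  have \<epsilon>_pos: "\<epsilon> m > 0" for m by (simp add: \<epsilon>_def)
  have "\<forall>m. \<exists>\<rho>>0. \<forall>x\<in>S. \<forall>z\<in>S. norm (x - z) < \<rho> \<longrightarrow>
          (\<forall>a\<in>D x. \<forall>b\<in>D z. (x - z) \<bullet> (a - b) \<le> \<epsilon> m * norm (x - z))"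
    using assms \<epsilon>_pos unfolding almost_antimonotone_on_def by simp
  from choice[OF this] obtain r where r_pos: "\<And>m. r m > 0" and r_mono: "\<And>m x z a b. x \<in> S \<Longrightarrow>
      z \<in> S \<Longrightarrow> norm (x - z) < r m \<Longrightarrow> a \<in> D x \<Longrightarrow> b \<in> D z \<Longrightarrow>
      (x - z) \<bullet> (a - b) \<le> \<epsilon> m * norm (x - z)"
    by blast
  define piece where "piece = (\<lambda>(c, c', m, x0). {x \<in> S \<inter> ball x0 (r m / 2).
      \<exists>a\<in>D x. \<exists>b\<in>D x. norm (a - c) < \<epsilon> m \<and> norm (b - c') < \<epsilon> m})"
  define I where "I = {(c, c', m, x0). c \<in> Q \<and> c' \<in> Q \<and> x0 \<in> Q \<and> 6 * \<epsilon> m \<le> norm (c - c')}"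
  have "countable I"
    by (rule countable_subset[of _ "Q \<times> Q \<times> UNIV \<times> Q"]) (auto simp: I_def \<open>countable Q\<close>)
  moreover have "negligible (piece i)" if "i \<in> I" for i
  proof -
    obtain c c' m x0 where i: "i = (c, c', m, x0)" by (cases i)
    show ?thesis
    proof (rule negligible_if_near_two_separated_values[where D = D and \<delta> = "\<epsilon> m" and c = c and c' = c'])
      fix x z a b assume "x \<in> piece i" "z \<in> piece i" "a \<in> D x" "b \<in> D z"
      moreover have "norm (x - z) < r m"
        using \<open>x \<in> piece i\<close> \<open>z \<in> piece i\<close> dist_triangle_half_r[of x0 x "r m" z]
        by (simp add: piece_def i dist_norm)
      ultimately show "(x - z) \<bullet> (a - b) \<le> \<epsilon> m * norm (x - z)"
        using r_mono by (simp add: piece_def i)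
    qed (use that \<epsilon>_pos in \<open>auto simp: piece_def I_def i\<close>)
  qed
  ultimately have "negligible (\<Union> (piece ` I))"
    by (intro negligible_countable_Union) auto
  moreover have "{x \<in> S. \<exists>a\<in>D x. \<exists>b\<in>D x. a \<noteq> b} \<subseteq> \<Union> (piece ` I)"
  proof
    fix x assume "x \<in> {x \<in> S. \<exists>a\<in>D x. \<exists>b\<in>D x. a \<noteq> b}"
    then obtain a b where x: "x \<in> S" "a \<in> D x" "b \<in> D x" "a \<noteq> b" by blast
    obtain m where m: "\<epsilon> m < norm (a - b) / 8"
      using reals_Archimedean[of "norm (a - b) / 8"] \<open>a \<noteq> b\<close> by (auto simp: \<epsilon>_def inverse_eq_divide)
    obtain c where c: "c \<in> Q" "norm (a - c) < \<epsilon> m"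
      using Q_dense[of "ball a (\<epsilon> m)"] \<epsilon>_pos[of m] by (auto simp: dist_norm)
    obtain c' where c': "c' \<in> Q" "norm (b - c') < \<epsilon> m"
      using Q_dense[of "ball b (\<epsilon> m)"] \<epsilon>_pos[of m] by (auto simp: dist_norm)
    obtain x0 where x0: "x0 \<in> Q" "x \<in> ball x0 (r m / 2)"
      using Q_dense[of "ball x (r m / 2)"] r_pos[of m] by (auto simp: dist_commute)
    have "norm (a - b) \<le> norm (a - c) + norm (c - c') + norm (b - c')"
      using norm_triangle_ineq[of "a - c" "c - c'"] norm_triangle_ineq[of "(a - c) + (c - c')" "c' - b"]
      by (simp add: norm_minus_commute)
    then have "(c, c', m, x0) \<in> I" using c c' x0 m by (simp add: I_def)
    moreover have "x \<in> piece (c, c', m, x0)" using x c c' x0 by (auto simp: piece_def)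
    ultimately show "x \<in> \<Union> (piece ` I)" by blast
  qed
  ultimately show ?thesis by (rule negligible_subset)
qed

lemma uniformly_continuous_on_Times_uniform:
  fixes H :: "'a::metric_space \<Rightarrow> 'b::metric_space \<Rightarrow> 'c::metric_space"
  assumes "uniformly_continuous_on (X \<times> E) (\<lambda>(x, e). H x e)" and "\<kappa> > 0"
  obtains d where "d > 0"
    and "\<And>x z e. x \<in> X \<Longrightarrow> z \<in> X \<Longrightarrow> e \<in> E \<Longrightarrow> dist z x < d \<Longrightarrow> dist (H z e) (H x e) < \<kappa>"
proof -
  obtain d where "d > 0" and d: "\<And>q q'. q \<in> X \<times> E \<Longrightarrow> q' \<in> X \<times> E \<Longrightarrow> dist q' q < d \<Longrightarrow>
      dist ((\<lambda>(x, e). H x e) q') ((\<lambda>(x, e). H x e) q) < \<kappa>"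
    using assms unfolding uniformly_continuous_on_def by metis
  have "dist (H z e) (H x e) < \<kappa>" if "x \<in> X" "z \<in> X" "e \<in> E" "dist z x < d" for x z e
    using d[of "(x, e)" "(z, e)"] that by (simp add: dist_Pair_Pair)
  with \<open>d > 0\<close> show ?thesis using that by blast
qed

locale min_family =
  fixes X :: "'a::euclidean_space set" and E :: "'b::metric_space set"
    and G :: "'a \<Rightarrow> 'b \<Rightarrow> real" and DG :: "'a \<Rightarrow> 'b \<Rightarrow> 'a"
  assumes compact_X: "compact X" and convex_X: "convex X"
    and compact_E: "compact E" and E_nonempty: "E \<noteq> {}"
    and continuous_G: "continuous_on (X \<times> E) (\<lambda>(x, e). G x e)"
    and continuous_DG: "continuous_on (X \<times> E) (\<lambda>(x, e). DG x e)"
    and has_gradient_G: "\<And>x e. x \<in> X \<Longrightarrow> e \<in> E \<Longrightarrow> GDERIV (\<lambda>z. G z e) x :> DG x e"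
begin

definition envelope :: "'a \<Rightarrow> real" where
  "envelope x = (INF e\<in>E. G x e)"

definition active_gradients :: "'a \<Rightarrow> 'a set" where
  "active_gradients x = {DG x e | e. e \<in> E \<and> G x e = envelope x}"

lemma active_gradientsI: "e \<in> E \<Longrightarrow> G x e = envelope x \<Longrightarrow> DG x e \<in> active_gradients x"
  unfolding active_gradients_def by blast

lemma active_gradient_eq:
  "active_gradients x = {p} \<Longrightarrow> e \<in> E \<Longrightarrow> G x e = envelope x \<Longrightarrow> DG x e = p"
  using active_gradientsI by blast

lemma continuous_on_G_slice: "x \<in> X \<Longrightarrow> continuous_on E (G x)"
  by (rule continuous_on_compose2[OF continuous_G, of E "\<lambda>e. (x, e)", simplified])
     (auto intro!: continuous_intros)

lemma envelope_le: "x \<in> X \<Longrightarrow> e \<in> E \<Longrightarrow> envelope x \<le> G x e"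
  unfolding envelope_def
  by (intro cINF_lower bounded_imp_bdd_below compact_imp_bounded compact_continuous_image
      continuous_on_G_slice compact_E)

lemma envelope_attained:
  assumes "x \<in> X"
  obtains e where "e \<in> E" and "G x e = envelope x"
proof -
  obtain e where "e \<in> E" and min: "\<And>e'. e' \<in> E \<Longrightarrow> G x e \<le> G x e'"
    using continuous_attains_inf[OF compact_E E_nonempty continuous_on_G_slice[OF assms]] by blast
  moreover have "envelope x = G x e"
    unfolding envelope_def using \<open>e \<in> E\<close> min by (intro cInf_eq_minimum) auto
  ultimately show ?thesis using that by simp
qed

lemma envelope_diff_bounds:
  assumes "x \<in> X" and "z \<in> X"
    and "e \<in> E" and "G x e = envelope x" and "e' \<in> E" and "G z e' = envelope z"
  shows "G z e' - G x e' \<le> envelope z - envelope x" and "envelope z - envelope x \<le> G z e - G x e"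
  using envelope_le[of z e] envelope_le[of x e'] assms by auto

lemma uniformly_continuous_G: "uniformly_continuous_on (X \<times> E) (\<lambda>(x, e). G x e)"
  by (intro compact_uniformly_continuous continuous_G compact_Times compact_X compact_E)

lemma uniformly_continuous_DG: "uniformly_continuous_on (X \<times> E) (\<lambda>(x, e). DG x e)"
  by (intro compact_uniformly_continuous continuous_DG compact_Times compact_X compact_E)

lemma uniform_linearization:
  assumes "\<epsilon> > 0"
  obtains r where "r > 0" and "\<And>x z e. x \<in> X \<Longrightarrow> z \<in> X \<Longrightarrow> e \<in> E \<Longrightarrow> norm (z - x) < r \<Longrightarrow>
      \<bar>G z e - G x e - (z - x) \<bullet> DG x e\<bar> \<le> \<epsilon> * norm (z - x)"
proof -
  obtain r where "r > 0" and r: "\<And>x w e. x \<in> X \<Longrightarrow> w \<in> X \<Longrightarrow> e \<in> E \<Longrightarrow> dist w x < r \<Longrightarrow>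
      dist (DG w e) (DG x e) < \<epsilon>"
    using uniformly_continuous_on_Times_uniform[OF uniformly_continuous_DG assms] by blast
  have "\<bar>G z e - G x e - (z - x) \<bullet> DG x e\<bar> \<le> \<epsilon> * norm (z - x)"
    if "x \<in> X" "z \<in> X" "e \<in> E" "norm (z - x) < r" for x z e
  proof -
    define S where "S = X \<inter> ball x r"
    have "x \<in> S" "z \<in> S" using that \<open>r > 0\<close> by (auto simp: S_def dist_norm norm_minus_commute)
    have "convex S" unfolding S_def by (intro convex_Int convex_X convex_ball)
    have segment: "x + t *\<^sub>R (z - x) \<in> S" if "t \<in> {0..1}" for t
    proof -
      have "x + t *\<^sub>R (z - x) = (1 - t) *\<^sub>R x + t *\<^sub>R z" by (simp add: algebra_simps)
      then show ?thesis using convexD_alt[OF \<open>convex S\<close> \<open>x \<in> S\<close> \<open>z \<in> S\<close>] that by simp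
    qed
    have derivative: "((\<lambda>v. G v e) has_derivative (\<lambda>v. v \<bullet> DG w e)) (at w within S)" if "w \<in> S" for w
      using has_gradient_G[of w e] that \<open>e \<in> E\<close>
      by (auto simp: S_def gderiv_def intro: has_derivative_at_withinI)
    have bound: "onorm ((\<lambda>v. v \<bullet> DG w e) - (\<lambda>v. v \<bullet> DG x e)) \<le> \<epsilon>" if "w \<in> S" for w
    proof (rule onorm_le)
      fix v :: 'a
      have "norm (DG w e - DG x e) < \<epsilon>"
        using r[of x w e] that \<open>x \<in> X\<close> \<open>e \<in> E\<close> by (auto simp: S_def dist_norm norm_minus_commute)
      then show "norm (((\<lambda>v. v \<bullet> DG w e) - (\<lambda>v. v \<bullet> DG x e)) v) \<le> \<epsilon> * norm v"
        using inner_le_of_norm_less[of "DG w e - DG x e" \<epsilon> v] by (simp add: inner_diff_right)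
    qed
    have "norm (G z e - G x e - (z - x) \<bullet> DG x e) \<le> norm (z - x) * \<epsilon>"
      by (rule differentiable_bound_linearization[OF segment derivative bound \<open>x \<in> S\<close>])
    then show ?thesis by (simp add: mult.commute)
  qed
  with \<open>r > 0\<close> show ?thesis using that by blast
qed

lemma almost_antimonotone_active_gradients: "almost_antimonotone_on X active_gradients"
  unfolding almost_antimonotone_on_def
proof (intro allI impI)
  fix \<epsilon> :: real assume "\<epsilon> > 0"
  then obtain r where "r > 0" and lin: "\<And>x z e. x \<in> X \<Longrightarrow> z \<in> X \<Longrightarrow> e \<in> E \<Longrightarrow>
      norm (z - x) < r \<Longrightarrow> \<bar>G z e - G x e - (z - x) \<bullet> DG x e\<bar> \<le> \<epsilon> / 2 * norm (z - x)"
    using uniform_linearization[of "\<epsilon> / 2"] by (metis half_gt_zero)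
  have "(x - z) \<bullet> (a - b) \<le> \<epsilon> * norm (x - z)"
    if "x \<in> X" "z \<in> X" "norm (x - z) < r" "a \<in> active_gradients x" "b \<in> active_gradients z" for x z a b
  proof -
    obtain e where e: "e \<in> E" "G x e = envelope x" "a = DG x e"
      using \<open>a \<in> active_gradients x\<close> by (auto simp: active_gradients_def)
    obtain e' where e': "e' \<in> E" "G z e' = envelope z" "b = DG z e'"
      using \<open>b \<in> active_gradients z\<close> by (auto simp: active_gradients_def)
    have "G z e' - G x e' \<le> G z e - G x e"
      using envelope_diff_bounds[OF that(1,2) e(1,2) e'(1,2)] by linarith
    moreover have "norm (z - x) < r" using that(3) by (simp add: norm_minus_commute)
    then have "G z e - G x e - (z - x) \<bullet> a \<le> \<epsilon> / 2 * norm (x - z)"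
      using abs_le_D1[OF lin[of x z e]] that e by (simp add: norm_minus_commute)
    moreover have "G x e' - G z e' - (x - z) \<bullet> b \<le> \<epsilon> / 2 * norm (x - z)"
      using abs_le_D1[OF lin[of z x e']] that e' by simp
    ultimately show ?thesis
      by (simp add: inner_diff_left inner_diff_right)
  qed
  with \<open>r > 0\<close> show "\<exists>r>0. \<forall>x\<in>X. \<forall>z\<in>X. norm (x - z) < r \<longrightarrow>
      (\<forall>a\<in>active_gradients x. \<forall>b\<in>active_gradients z. (x - z) \<bullet> (a - b) \<le> \<epsilon> * norm (x - z))"
    by blast
qed

lemma continuous_on_envelope: "continuous_on X envelope"
  unfolding continuous_on_iff
proof (intro ballI allI impI)
  fix x and \<kappa> :: real assume "x \<in> X" "\<kappa> > 0"
  then obtain d where "d > 0" and d: "\<And>x z e. x \<in> X \<Longrightarrow> z \<in> X \<Longrightarrow> e \<in> E \<Longrightarrow> dist z x < d \<Longrightarrow>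
      dist (G z e) (G x e) < \<kappa>"
    using uniformly_continuous_on_Times_uniform[OF uniformly_continuous_G] by blast
  have "dist (envelope z) (envelope x) < \<kappa>" if "z \<in> X" "dist z x < d" for z
  proof -
    obtain e where "e \<in> E" "G x e = envelope x" using envelope_attained[OF \<open>x \<in> X\<close>] by blast
    obtain e' where "e' \<in> E" "G z e' = envelope z" using envelope_attained[OF \<open>z \<in> X\<close>] by blast
    have "G z e' - G x e' \<le> envelope z - envelope x" "envelope z - envelope x \<le> G z e - G x e"
      using envelope_diff_bounds \<open>x \<in> X\<close> \<open>z \<in> X\<close> \<open>e \<in> E\<close> \<open>e' \<in> E\<close>
        \<open>G x e = envelope x\<close> \<open>G z e' = envelope z\<close> by blast+
    moreover have "dist (G z e) (G x e) < \<kappa>" "dist (G z e') (G x e') < \<kappa>"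
      using d \<open>x \<in> X\<close> that \<open>e \<in> E\<close> \<open>e' \<in> E\<close> by auto
    ultimately show ?thesis by (simp add: dist_real_def abs_less_iff)
  qed
  with \<open>d > 0\<close> show "\<exists>d>0. \<forall>z\<in>X. dist z x < d \<longrightarrow> dist (envelope z) (envelope x) < \<kappa>"
    by blast
qed

lemma compact_active_pairs: "compact {q \<in> X \<times> E. G (fst q) (snd q) = envelope (fst q)}"
proof -
  have "continuous_on (X \<times> E) (\<lambda>q. envelope (fst q))"
    by (rule continuous_on_compose2[OF continuous_on_envelope continuous_on_fst]) auto
  then have "continuous_on (X \<times> E) (\<lambda>q. G (fst q) (snd q) - envelope (fst q))"
    using continuous_G by (auto simp: split_beta intro!: continuous_intros)
  then have "closed {q \<in> X \<times> E. G (fst q) (snd q) - envelope (fst q) = 0}"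
    by (intro continuous_closed_preimage_constant compact_imp_closed compact_Times compact_X compact_E)
  then have "compact ((X \<times> E) \<inter> {q \<in> X \<times> E. G (fst q) (snd q) - envelope (fst q) = 0})"
    by (intro compact_Int_closed compact_Times compact_X compact_E)
  then show ?thesis by (simp add: Int_absorb1)
qed

text \<open>The active pairs whose gradient is at least \<open>\<eta>\<close> away from \<open>p\<close> form a compact set, and
  its projection to the first factor misses \<open>x\<close>.\<close>
lemma active_gradients_upper_semicontinuous:
  assumes "x \<in> X" and "active_gradients x = {p}" and "\<eta> > 0"
  obtains d where "d > 0"
    and "\<And>z e. z \<in> X \<Longrightarrow> e \<in> E \<Longrightarrow> dist z x < d \<Longrightarrow> G z e = envelope z \<Longrightarrow> dist (DG z e) p < \<eta>"
proof -
  define bad where "bad = {q \<in> X \<times> E. G (fst q) (snd q) = envelope (fst q)}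
    \<inter> ((X \<times> E) \<inter> (\<lambda>q. dist (DG (fst q) (snd q)) p) -` {\<eta>..})"
  have "continuous_on (X \<times> E) (\<lambda>q. dist (DG (fst q) (snd q)) p)"
    using continuous_DG by (auto simp: split_beta intro!: continuous_intros)
  then have "closed ((X \<times> E) \<inter> (\<lambda>q. dist (DG (fst q) (snd q)) p) -` {\<eta>..})"
    by (rule continuous_closed_preimage[OF _ compact_imp_closed[OF compact_Times[OF compact_X compact_E]]
        closed_atLeast])
  then have "compact bad"
    unfolding bad_def by (rule compact_Int_closed[OF compact_active_pairs])
  then have "compact (fst ` bad)"
    by (intro compact_continuous_image continuous_on_fst continuous_on_id)
  moreover have "x \<notin> fst ` bad"
  proof
    assume "x \<in> fst ` bad"
    then obtain e where "e \<in> E" "G x e = envelope x" "\<eta> \<le> dist (DG x e) p"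
      by (auto simp: bad_def)
    then have "DG x e = p" using active_gradient_eq[OF assms(2)] by blast
    then show False using assms(3) \<open>\<eta> \<le> dist (DG x e) p\<close> by simp
  qed
  ultimately obtain d where "d > 0" and "ball x d \<subseteq> - fst ` bad"
    using open_contains_ball[of "- fst ` bad"] compact_imp_closed[of "fst ` bad"]
    by (metis ComplI open_Compl)
  have "dist (DG z e) p < \<eta>" if "z \<in> X" "e \<in> E" "dist z x < d" "G z e = envelope z" for z e
  proof (rule ccontr)
    assume "\<not> dist (DG z e) p < \<eta>"
    then have "(z, e) \<in> bad" using that by (simp add: bad_def)
    then have "z \<in> fst ` bad" by (rule image_eqI[rotated]) simp
    moreover have "z \<in> ball x d" using that by (simp add: dist_commute)
    ultimately show False using \<open>ball x d \<subseteq> - fst ` bad\<close> by blast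
  qed
  with \<open>d > 0\<close> show ?thesis using that by blast
qed

lemma has_gradient_envelope:
  assumes "x \<in> interior X" and "active_gradients x = {p}"
  shows "GDERIV envelope x :> p"
  unfolding gderiv_def has_derivative_at_alt
proof (intro conjI allI impI)
  show "bounded_linear (\<lambda>v. v \<bullet> p)" by (rule bounded_linear_inner_left)
  fix \<epsilon> :: real assume "\<epsilon> > 0"
  have "x \<in> X" using assms(1) interior_subset by blast
  obtain r where "r > 0" and lin: "\<And>x z e. x \<in> X \<Longrightarrow> z \<in> X \<Longrightarrow> e \<in> E \<Longrightarrow>
      norm (z - x) < r \<Longrightarrow> \<bar>G z e - G x e - (z - x) \<bullet> DG x e\<bar> \<le> \<epsilon> / 2 * norm (z - x)"
    using uniform_linearization[of "\<epsilon> / 2"] \<open>\<epsilon> > 0\<close> by (metis half_gt_zero)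
  obtain d where "d > 0" and near: "\<And>z e. z \<in> X \<Longrightarrow> e \<in> E \<Longrightarrow> dist z x < d \<Longrightarrow>
      G z e = envelope z \<Longrightarrow> dist (DG z e) p < \<epsilon> / 2"
    using active_gradients_upper_semicontinuous[OF \<open>x \<in> X\<close> assms(2), of "\<epsilon> / 2"] \<open>\<epsilon> > 0\<close>
    by (metis half_gt_zero)
  obtain d' where "d' > 0" and "ball x d' \<subseteq> X" using assms(1) mem_interior by blast
  obtain e0 where "e0 \<in> E" "G x e0 = envelope x" using envelope_attained[OF \<open>x \<in> X\<close>] by blast
  then have "DG x e0 = p" using active_gradient_eq[OF assms(2)] by blast
  have "norm (envelope z - envelope x - (z - x) \<bullet> p) \<le> \<epsilon> * norm (z - x)"
    if "norm (z - x) < min r (min d d')" for z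
  proof -
    have "z \<in> X" using that \<open>ball x d' \<subseteq> X\<close> by (auto simp: dist_norm norm_minus_commute)
    obtain e where "e \<in> E" "G z e = envelope z" using envelope_attained[OF \<open>z \<in> X\<close>] by blast
    have "G z e - G x e \<le> envelope z - envelope x" "envelope z - envelope x \<le> G z e0 - G x e0"
      using envelope_diff_bounds \<open>x \<in> X\<close> \<open>z \<in> X\<close> \<open>e0 \<in> E\<close> \<open>e \<in> E\<close>
        \<open>G x e0 = envelope x\<close> \<open>G z e = envelope z\<close> by blast+
    moreover have "G z e0 - G x e0 - (z - x) \<bullet> p \<le> \<epsilon> / 2 * norm (z - x)"
      using abs_le_D1[OF lin[of x z e0]] that \<open>x \<in> X\<close> \<open>z \<in> X\<close> \<open>e0 \<in> E\<close> \<open>DG x e0 = p\<close> by simp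
    moreover have "G x e - G z e - (x - z) \<bullet> DG z e \<le> \<epsilon> / 2 * norm (z - x)"
      using abs_le_D1[OF lin[of z x e]] that \<open>x \<in> X\<close> \<open>z \<in> X\<close> \<open>e \<in> E\<close>
      by (simp add: norm_minus_commute)
    moreover have "norm (DG z e - p) < \<epsilon> / 2"
      using near[OF \<open>z \<in> X\<close> \<open>e \<in> E\<close> _ \<open>G z e = envelope z\<close>] that by (simp add: dist_norm)
    then have "\<bar>(x - z) \<bullet> (DG z e - p)\<bar> \<le> \<epsilon> / 2 * norm (z - x)"
      using inner_le_of_norm_less by (metis norm_minus_commute)
    moreover have "(x - z) \<bullet> DG z e = - ((z - x) \<bullet> p) + (x - z) \<bullet> (DG z e - p)"
      by (simp add: inner_diff_left inner_diff_right)
    ultimately show ?thesis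
      unfolding real_norm_def abs_le_iff by linarith
  qed
  then show "\<exists>d>0. \<forall>z. norm (z - x) < d \<longrightarrow>
      norm (envelope z - envelope x - (z - x) \<bullet> p) \<le> \<epsilon> * norm (z - x)"
    using \<open>r > 0\<close> \<open>d > 0\<close> \<open>d' > 0\<close> by (intro exI[of _ "min r (min d d')"]) auto
qed

theorem ae_has_gradient_envelope:
  "AE x in lebesgue. x \<in> interior X \<longrightarrow> (\<exists>p. active_gradients x = {p} \<and> GDERIV envelope x :> p)"
  unfolding eventually_ae_filter_negligible
proof (intro exI conjI)
  show "negligible {x \<in> X. \<exists>a\<in>active_gradients x. \<exists>b\<in>active_gradients x. a \<noteq> b}"
    by (rule negligible_multivalued_points[OF almost_antimonotone_active_gradients])
  have "\<exists>p. active_gradients x = {p}"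
    if "x \<in> X" and single: "\<forall>a\<in>active_gradients x. \<forall>b\<in>active_gradients x. a = b" for x
  proof -
    obtain e where "e \<in> E" "G x e = envelope x" using envelope_attained[OF \<open>x \<in> X\<close>] by blast
    then have "DG x e \<in> active_gradients x" by (rule active_gradientsI)
    then show ?thesis using single by blast
  qed
  then show "{x. \<not> (x \<in> interior X \<longrightarrow> (\<exists>p. active_gradients x = {p} \<and> GDERIV envelope x :> p))}
      \<subseteq> {x \<in> X. \<exists>a\<in>active_gradients x. \<exists>b\<in>active_gradients x. a \<noteq> b}"
    using has_gradient_envelope interior_subset by (smt (verit) Collect_mono_iff subsetD)
qed

end

lemma image_affine_cball_0_1:
  fixes x :: "'a::real_normed_vector"
  assumes "r > 0"
  shows "(\<lambda>e. x + r *\<^sub>R e) ` cball 0 1 = cball x r"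
proof -
  have "(\<lambda>e. r *\<^sub>R e) ` cball (0::'a) 1 = cball 0 r"
    using cball_scale[of r 0 1] assms by simp
  then have "(+) x ` (\<lambda>e. r *\<^sub>R e) ` cball 0 1 = cball x r"
    by simp
  then show ?thesis by (simp add: image_image)
qed

locale shifted_ball_family =
  fixes \<psi> h :: "'a::euclidean_space \<Rightarrow> real" and d\<psi> dh :: "'a \<Rightarrow> 'a"
  assumes has_gradient_\<psi>: "\<And>x. x \<in> ball 0 2 \<Longrightarrow> GDERIV \<psi> x :> d\<psi> x"
    and continuous_d\<psi>: "continuous_on (ball 0 2) d\<psi>"
    and has_gradient_h: "\<And>y. y \<in> ball 0 2 \<Longrightarrow> GDERIV h y :> dh y"
    and continuous_dh: "continuous_on (ball 0 2) dh"
    and \<psi>_bounds: "\<And>x. x \<in> ball 0 2 \<Longrightarrow> 0 < \<psi> x \<and> \<psi> x < 1/2"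
begin

lemma shift_in_ball:
  assumes "x \<in> cball 0 1" and "e \<in> cball 0 1"
  shows "x + \<psi> x *\<^sub>R e \<in> ball 0 2"
proof -
  have "0 < \<psi> x" "\<psi> x < 1/2" using \<psi>_bounds assms(1) by auto
  then have "norm (\<psi> x *\<^sub>R e) \<le> \<psi> x" using assms(2) by (simp add: mult_left_le)
  then have "norm (x + \<psi> x *\<^sub>R e) \<le> 3/2"
    using norm_triangle_ineq[of x "\<psi> x *\<^sub>R e"] assms(1) \<open>\<psi> x < 1/2\<close> by simp
  then show ?thesis by simp
qed

lemma continuous_on_shift: "continuous_on (cball 0 1 \<times> cball 0 1) (\<lambda>(x, e). x + \<psi> x *\<^sub>R e)"
proof -
  have "continuous_on (ball 0 2) \<psi>"
    using has_gradient_\<psi> unfolding gderiv_def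
    by (meson continuous_at_imp_continuous_on has_derivative_continuous)
  then have "continuous_on (cball 0 1 \<times> cball 0 1) (\<lambda>q. \<psi> (fst q))"
    by (rule continuous_on_compose2[OF _ continuous_on_fst[OF continuous_on_id]]) auto
  then show ?thesis by (auto simp: split_beta intro!: continuous_intros)
qed

lemma continuous_on_compose_shift:
  assumes "continuous_on (ball 0 2) g"
  shows "continuous_on (cball 0 1 \<times> cball 0 1) (\<lambda>(x, e). g (x + \<psi> x *\<^sub>R e))"
proof -
  have "(\<lambda>(x, e). x + \<psi> x *\<^sub>R e) ` (cball 0 1 \<times> cball 0 1) \<subseteq> ball 0 2"
    using shift_in_ball by auto
  from continuous_on_compose2[OF assms continuous_on_shift this] show ?thesis
    by (simp add: split_beta)
qed

sublocale min_family "cball 0 1" "cball 0 1" "\<lambda>x e. h (x + \<psi> x *\<^sub>R e)"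
  "\<lambda>x e. dh (x + \<psi> x *\<^sub>R e) + (dh (x + \<psi> x *\<^sub>R e) \<bullet> e) *\<^sub>R d\<psi> x"
proof
  have "continuous_on (ball 0 2) h"
    using has_gradient_h unfolding gderiv_def
    by (meson continuous_at_imp_continuous_on has_derivative_continuous)
  then show "continuous_on (cball 0 1 \<times> cball 0 1) (\<lambda>(x, e). h (x + \<psi> x *\<^sub>R e))"
    by (rule continuous_on_compose_shift)
  have "continuous_on (cball 0 1 \<times> cball 0 1) (\<lambda>q. d\<psi> (fst q))"
    using continuous_d\<psi> by (rule continuous_on_compose2[OF _ continuous_on_fst[OF continuous_on_id]]) auto
  then show "continuous_on (cball 0 1 \<times> cball 0 1)
      (\<lambda>(x, e). dh (x + \<psi> x *\<^sub>R e) + (dh (x + \<psi> x *\<^sub>R e) \<bullet> e) *\<^sub>R d\<psi> x)"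
    using continuous_on_compose_shift[OF continuous_dh]
    by (auto simp: split_beta intro!: continuous_intros)
  fix x e :: 'a assume "x \<in> cball 0 1" "e \<in> cball 0 1"
  then have "((\<lambda>z. z + \<psi> z *\<^sub>R e) has_derivative (\<lambda>v. v + (v \<bullet> d\<psi> x) *\<^sub>R e)) (at x)"
    using has_gradient_\<psi>[of x] unfolding gderiv_def by (auto intro!: derivative_eq_intros)
  from has_derivative_compose[OF this has_gradient_h[OF shift_in_ball, unfolded gderiv_def]]
  have "((\<lambda>z. h (z + \<psi> z *\<^sub>R e)) has_derivative
      (\<lambda>v. (v + (v \<bullet> d\<psi> x) *\<^sub>R e) \<bullet> dh (x + \<psi> x *\<^sub>R e))) (at x)"
    using \<open>x \<in> cball 0 1\<close> \<open>e \<in> cball 0 1\<close> by blast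
  then show "GDERIV (\<lambda>z. h (z + \<psi> z *\<^sub>R e)) x :>
      dh (x + \<psi> x *\<^sub>R e) + (dh (x + \<psi> x *\<^sub>R e) \<bullet> e) *\<^sub>R d\<psi> x"
    unfolding gderiv_def by (simp add: inner_add_left inner_add_right algebra_simps inner_commute)
qed auto

lemma cball_subset_ball_2:
  assumes "x \<in> cball 0 1"
  shows "cball x (\<psi> x) \<subseteq> ball 0 2"
proof
  fix y assume "y \<in> cball x (\<psi> x)"
  then have "norm y \<le> norm x + \<psi> x"
    using norm_triangle_ineq[of x "y - x"] by (simp add: dist_norm norm_minus_commute)
  then show "y \<in> ball 0 2" using assms \<psi>_bounds[of x] by simp
qed

lemma envelope_eq_Inf_cball:
  assumes "x \<in> cball 0 1"
  shows "envelope x = (INF y\<in>cball x (\<psi> x). h y)"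
proof -
  have "cball x (\<psi> x) = (\<lambda>e. x + \<psi> x *\<^sub>R e) ` cball 0 1"
    using image_affine_cball_0_1[of "\<psi> x" x] \<psi>_bounds[of x] assms by simp
  then have "h ` cball x (\<psi> x) = (\<lambda>e. h (x + \<psi> x *\<^sub>R e)) ` cball 0 1"
    by (simp add: image_image)
  then show ?thesis unfolding envelope_def by simp
qed

lemma gradient_of_envelope_at_minimiser:
  assumes "x \<in> ball 0 1" and "active_gradients x = {p}"
    and "y \<in> cball x (\<psi> x)" and "h y = envelope x"
  shows "norm (p - dh y) = norm (dh y) * norm (d\<psi> x)"
proof -
  have "\<psi> x > 0" using \<psi>_bounds assms(1) by simp
  then have shift_onto: "(\<lambda>e. x + \<psi> x *\<^sub>R e) ` cball 0 1 = cball x (\<psi> x)"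
    by (rule image_affine_cball_0_1)
  from assms(3)[folded shift_onto] obtain e where y: "y = x + \<psi> x *\<^sub>R e" and "e \<in> cball 0 1"
    by (rule imageE)
  have "h (x + \<psi> x *\<^sub>R e) = envelope x" using assms(4) y by simp
  from active_gradient_eq[OF assms(2) \<open>e \<in> cball 0 1\<close> this]
  have "p = dh y + (dh y \<bullet> e) *\<^sub>R d\<psi> x" unfolding y by (rule sym)
  have min: "h y \<le> h z" if "z \<in> cball x (\<psi> x)" for z
  proof -
    from that[folded shift_onto] obtain e' where z: "z = x + \<psi> x *\<^sub>R e'" and "e' \<in> cball 0 1"
      by (rule imageE)
    then have "envelope x \<le> h z" using envelope_le[of x e'] assms(1) by simp
    then show ?thesis using assms(4) by simp
  qed
  have "y \<in> ball 0 2" using shift_in_ball \<open>e \<in> cball 0 1\<close> assms(1) y by simp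
  have "\<psi> x * (dh y \<bullet> e) = (y - x) \<bullet> dh y" unfolding y by (simp add: inner_commute)
  also have "\<dots> = \<psi> x * - norm (dh y)"
    using gradient_at_min_on_cball[OF has_gradient_h[OF \<open>y \<in> ball 0 2\<close>] assms(3) min] by simp
  finally have "dh y \<bullet> e = - norm (dh y)"
    using mult_left_cancel[of "\<psi> x"] \<open>\<psi> x > 0\<close> by (metis less_irrefl)
  then show ?thesis using \<open>p = dh y + (dh y \<bullet> e) *\<^sub>R d\<psi> x\<close> by simp
qed

theorem ae_gradient_identity:
  assumes f: "\<And>x. f x = (INF y\<in>cball x (\<psi> x). h y)"
  shows "AE x in lebesgue. x \<in> ball 0 1 \<longrightarrow>
           (\<exists>Df. GDERIV f x :> Df \<and>
              (\<forall>y\<in>cball x (\<psi> x). f x = h y \<longrightarrow>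
                 (\<forall>Dh D\<psi>. GDERIV h y :> Dh \<longrightarrow> GDERIV \<psi> x :> D\<psi> \<longrightarrow>
                    norm (Df - Dh) = norm Dh * norm D\<psi>)))"
proof -
  have f_eq: "f z = envelope z" if "z \<in> ball 0 1" for z
  proof -
    have "z \<in> cball 0 1" using that by simp
    then show ?thesis by (simp only: f envelope_eq_Inf_cball)
  qed
  show ?thesis
    using ae_has_gradient_envelope
  proof (rule eventually_mono, intro impI)
    fix x assume "x \<in> ball 0 1"
      and "x \<in> interior (cball 0 1) \<longrightarrow> (\<exists>p. active_gradients x = {p} \<and> GDERIV envelope x :> p)"
    moreover have "x \<in> interior (cball 0 1)" using \<open>x \<in> ball 0 1\<close> by simp
    ultimately obtain p where p: "active_gradients x = {p}" "GDERIV envelope x :> p" by blast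
    have "GDERIV f x :> p"
      unfolding gderiv_def
      by (rule has_derivative_transform_within_open[OF p(2)[unfolded gderiv_def] open_ball \<open>x \<in> ball 0 1\<close>])
        (simp add: f_eq)
    moreover have "norm (p - Dh) = norm Dh * norm D\<psi>"
      if "y \<in> cball x (\<psi> x)" "f x = h y" "GDERIV h y :> Dh" "GDERIV \<psi> x :> D\<psi>" for y Dh D\<psi>
    proof -
      have "y \<in> ball 0 2" using cball_subset_ball_2[of x] \<open>x \<in> ball 0 1\<close> that(1) by auto
      then have "Dh = dh y" using GDERIV_unique[OF that(3) has_gradient_h] by blast
      have "D\<psi> = d\<psi> x" using GDERIV_unique[OF that(4) has_gradient_\<psi>] \<open>x \<in> ball 0 1\<close> by simp
      then show ?thesis
        using \<open>Dh = dh y\<close> gradient_of_envelope_at_minimiser[OF \<open>x \<in> ball 0 1\<close> p(1) that(1)] that(2)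
          f_eq[OF \<open>x \<in> ball 0 1\<close>] by simp
    qed
    ultimately show "\<exists>Df. GDERIV f x :> Df \<and>
              (\<forall>y\<in>cball x (\<psi> x). f x = h y \<longrightarrow>
                 (\<forall>Dh D\<psi>. GDERIV h y :> Dh \<longrightarrow> GDERIV \<psi> x :> D\<psi> \<longrightarrow>
                    norm (Df - Dh) = norm Dh * norm D\<psi>))"
      by blast
  qed
qed

end

theorem lemma5p4:
  fixes \<psi> h f :: "'a::euclidean_space \<Rightarrow> real"
  assumes "smooth_on (ball 0 2) \<psi>"
    and "smooth_on (ball 0 2) h"
    and "\<forall>x\<in>ball 0 2. 0 < \<psi> x \<and> \<psi> x < 1/2"
    and "\<forall>x\<in>ball 0 2. h x \<ge> 0"
    and "\<And>x. f x = (INF y\<in>cball x (\<psi> x). h y)"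
  shows "AE x in lebesgue. x \<in> ball 0 1 \<longrightarrow>
           (\<exists>Df. GDERIV f x :> Df \<and>
              (\<forall>y\<in>cball x (\<psi> x). f x = h y \<longrightarrow>
                 (\<forall>Dh D\<psi>. GDERIV h y :> Dh \<longrightarrow> GDERIV \<psi> x :> D\<psi> \<longrightarrow>
                    norm (Df - Dh) = norm Dh * norm D\<psi>)))"
proof -
  obtain d\<psi> where "\<And>x. x \<in> ball 0 2 \<Longrightarrow> GDERIV \<psi> x :> d\<psi> x" "continuous_on (ball 0 2) d\<psi>"
    using smooth_on_imp_continuous_gradient[OF assms(1) open_ball] by blast
  moreover obtain dh where "\<And>y. y \<in> ball 0 2 \<Longrightarrow> GDERIV h y :> dh y" "continuous_on (ball 0 2) dh"
    using smooth_on_imp_continuous_gradient[OF assms(2) open_ball] by blast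
  ultimately interpret shifted_ball_family \<psi> h d\<psi> dh
    using assms(3) by unfold_locales auto
  show ?thesis using assms(5) by (rule ae_gradient_identity)
qed

end
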